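(* Let $\mathscr{H}$ be a finite-dimensional complex Hilbert space and let $A=\{a_k\}_{k=1}^{m}$ and $B=\{b_j\}_{j=1}^{n}$ be frames of $\mathscr{H}$, where $A$ has lower and upper frame bounds $\alpha_1,\alpha_2$ and $B$ has lower and upper frame bounds $\beta_1,\beta_2$. Let $S\subseteq\{1,\dots,m\}$ and $T\subseteq\{1,\dots,n\}$ satisfy $$|S|\,|T|\,M(A^*,B)^2<\frac{\beta_1}{\alpha_2}.$$ Then for every $x\in\mathscr{H}$, $$C(S,T)\,\|x\|\le\Big(\sum_{k\in S^c}|\langle x,a_k\rangle|^2\Big)^{1/2}+\Big(\sum_{j\in T^c}|\langle x,b_j\rangle|^2\Big)^{1/2},$$ where $$C(S,T)=\Big(1-\Big(\tfrac{\alpha_2}{\beta_1}\Big)^{1/2}M(A^*,B)\,|S|^{1/2}|T|^{1/2}\Big)\Big(\max\Big\{\beta_1^{-1/2},\ \Big(1+\Big(\tfrac{\beta_2}{\beta_1}\Big)^{1/2}\Big)\alpha_1^{-1/2}\,m\,M(A^*,A)\Big\}\Big)^{-1}.$$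
   Context: A finite family $\{a_k\}_{k=1}^m$ is a frame of $\mathscr{H}$ with lower and upper frame bounds $0<\alpha_1\le\alpha_2$ if $\alpha_1\|x\|^2\le\sum_k|\langle x,a_k\rangle|^2\le\alpha_2\|x\|^2$ for all $x$. The canonical dual frame of $A$ is $A^*=\{a_k^*\}_{k=1}^m$ with $a_k^*=F^{-1}a_k$, where $F x=\sum_k\langle x,a_k\rangle a_k$ is the frame operator of $A$. For two families $U=\{u_k\}$, $V=\{v_j\}$, the coherence is $M(U,V)=\max_{k,j}|\langle u_k,v_j\rangle|$. $S^c$ and $T^c$ are the complements in $\{1,\dots,m\}$ and $\{1,\dots,n\}$. *)

theory Defs
  imports "HOL-Analysis.Analysis"
begin

text \<open>A finite-dimensional complex Hilbert space is modelled as \<open>complex ^ 'n\<close> with the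
standard inner product, linear in the first argument.\<close>

definition cinner :: "complex ^ 'n \<Rightarrow> complex ^ 'n \<Rightarrow> complex" where
  "cinner x y = (\<Sum>i\<in>UNIV. x $ i * cnj (y $ i))"

definition is_frame :: "(nat \<Rightarrow> complex ^ 'n) \<Rightarrow> nat \<Rightarrow> real \<Rightarrow> real \<Rightarrow> bool" where
  "is_frame a m lo up \<longleftrightarrow> 0 < lo \<and> lo \<le> up \<and>
     (\<forall>x. lo * (norm x)\<^sup>2 \<le> (\<Sum>k=1..m. (cmod (cinner x (a k)))\<^sup>2) \<and>
          (\<Sum>k=1..m. (cmod (cinner x (a k)))\<^sup>2) \<le> up * (norm x)\<^sup>2)"

definition frame_op :: "(nat \<Rightarrow> complex ^ 'n) \<Rightarrow> nat \<Rightarrow> complex ^ 'n \<Rightarrow> complex ^ 'n" where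
  "frame_op a m x = (\<Sum>k=1..m. cinner x (a k) *s a k)"

definition dual_frame :: "(nat \<Rightarrow> complex ^ 'n) \<Rightarrow> nat \<Rightarrow> nat \<Rightarrow> complex ^ 'n" where
  "dual_frame a m k = inv (frame_op a m) (a k)"

definition coherence :: "(nat \<Rightarrow> complex ^ 'n) \<Rightarrow> nat \<Rightarrow> (nat \<Rightarrow> complex ^ 'n) \<Rightarrow> nat \<Rightarrow> real" where
  "coherence u m v n = Max ((\<lambda>(k, j). cmod (cinner (u k) (v j))) ` ({1..m} \<times> {1..n}))"


end

theory Submission
  imports Defs
begin

text \<open>Expand \<open>x = \<Sum>\<^sub>k \<langle>x,a\<^sub>k\<rangle> a\<^sup>*\<^sub>k\<close> in the dual frame and split it as \<open>y + z\<close>, where \<open>y\<close> collects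
  the terms with \<open>k \<in> S\<close>. The lower frame bound of \<open>B\<close> bounds \<open>\<surd>\<beta>\<^sub>1 \<parallel>x\<parallel>\<close> by the \<open>B\<close>-coefficients
  of \<open>x\<close> on \<open>T\<^sup>c\<close> plus those of \<open>y\<close> and of \<open>z\<close> on \<open>T\<close>. Each \<open>B\<close>-coefficient of \<open>y\<close> is at most
  \<open>M(A\<^sup>*,B) \<surd>|S| \<surd>\<alpha>\<^sub>2 \<parallel>x\<parallel>\<close> by Cauchy-Schwarz, while the \<open>B\<close>-coefficients of \<open>z\<close> have norm at most
  \<open>\<surd>\<beta>\<^sub>2 \<parallel>z\<parallel> \<le> \<surd>(\<beta>\<^sub>2/\<alpha>\<^sub>1)\<close> times the norm of the \<open>A\<close>-coefficients of \<open>x\<close> on \<open>S\<^sup>c\<close>. Dividing by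
  \<open>\<surd>\<beta>\<^sub>1\<close> and using \<open>m M(A\<^sup>*,A) \<ge> 1\<close> to dominate both coefficients by the maximum gives the claim.\<close>

lemma cinner_add_left: "cinner (x + y) z = cinner x z + cinner y z"
  unfolding cinner_def by (simp add: distrib_right sum.distrib)

lemma cinner_scale_left: "cinner (c *s x) z = c * cinner x z"
  unfolding cinner_def by (simp add: sum_distrib_left mult.assoc)

lemma cinner_zero_left [simp]: "cinner 0 z = 0"
  unfolding cinner_def by simp

lemma cinner_sum_left: "cinner (\<Sum>k\<in>K. f k) z = (\<Sum>k\<in>K. cinner (f k) z)"
  unfolding cinner_def by (simp add: sum_distrib_right sum.swap[of _ UNIV K])

lemma cinner_commute: "cinner y x = cnj (cinner x y)"
  unfolding cinner_def by (simp add: mult.commute)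

lemma L2_set_subset_le:
  assumes "K \<subseteq> L" "finite L"
  shows "L2_set f K \<le> L2_set f L"
  unfolding L2_set_def
  by (rule real_sqrt_le_mono, rule sum_mono2) (use assms in auto)

lemma L2_set_split_le:
  assumes "K \<subseteq> L" "finite L"
  shows "L2_set f L \<le> L2_set f (L - K) + L2_set f K"
proof -
  have "(\<Sum>i\<in>L. (f i)\<^sup>2) = (\<Sum>i\<in>L - K. (f i)\<^sup>2) + (\<Sum>i\<in>K. (f i)\<^sup>2)"
    by (rule sum.subset_diff) (use assms in auto)
  then show ?thesis
    unfolding L2_set_def by (simp add: sqrt_add_le_add_sqrt sum_nonneg)
qed

lemma L2_set_sum_mult_le:
  fixes c :: "'a \<Rightarrow> complex" and g :: "'a \<Rightarrow> 'b \<Rightarrow> complex"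
  assumes M: "0 \<le> M" and g: "\<And>k j. k \<in> S \<Longrightarrow> j \<in> T \<Longrightarrow> cmod (g k j) \<le> M"
  shows "L2_set (\<lambda>j. cmod (\<Sum>k\<in>S. c k * g k j)) T
           \<le> M * sqrt (card S) * sqrt (card T) * L2_set (\<lambda>k. cmod (c k)) S"
proof -
  have entry: "cmod (\<Sum>k\<in>S. c k * g k j) \<le> M * sqrt (card S) * L2_set (\<lambda>k. cmod (c k)) S"
    if j: "j \<in> T" for j
  proof -
    have "cmod (\<Sum>k\<in>S. c k * g k j) \<le> (\<Sum>k\<in>S. cmod (c k) * M)"
      by (rule order_trans[OF norm_sum sum_mono])
        (simp add: norm_mult g j mult_left_mono)
    also have "\<dots> = M * (\<Sum>k\<in>S. \<bar>cmod (c k)\<bar> * \<bar>1\<bar>)"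
      by (simp add: sum_distrib_left mult.commute)
    also have "\<dots> \<le> M * (L2_set (\<lambda>k. cmod (c k)) S * L2_set (\<lambda>k. 1) S)"
      by (rule mult_left_mono[OF L2_set_mult_ineq M])
    finally show ?thesis
      by (simp add: L2_set_constant mult_ac)
  qed
  have "L2_set (\<lambda>j. cmod (\<Sum>k\<in>S. c k * g k j)) T
          \<le> L2_set (\<lambda>j. M * sqrt (card S) * L2_set (\<lambda>k. cmod (c k)) S) T"
    by (rule L2_set_mono) (simp_all add: entry)
  then show ?thesis
    using M by (simp add: L2_set_constant mult_ac)
qed

lemma frame_lower_bound:
  assumes "is_frame a m lo up"
  shows "sqrt lo * norm x \<le> L2_set (\<lambda>k. cmod (cinner x (a k))) {1..m}"
proof -
  have "sqrt lo * norm x = sqrt (lo * (norm x)\<^sup>2)" by (simp add: real_sqrt_mult)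
  then show ?thesis
    using assms unfolding is_frame_def L2_set_def by (metis real_sqrt_le_mono)
qed

lemma frame_upper_bound:
  assumes "is_frame a m lo up"
  shows "L2_set (\<lambda>k. cmod (cinner x (a k))) {1..m} \<le> sqrt up * norm x"
proof -
  have "sqrt up * norm x = sqrt (up * (norm x)\<^sup>2)" by (simp add: real_sqrt_mult)
  then show ?thesis
    using assms unfolding is_frame_def L2_set_def by (metis real_sqrt_le_mono)
qed

lemma frame_op_component: "frame_op a m x $ i = (\<Sum>k=1..m. cinner x (a k) * a k $ i)"
  unfolding frame_op_def by simp

lemma frame_op_sum_scale:
  "frame_op a m (\<Sum>k\<in>K. c k *s y k) = (\<Sum>k\<in>K. c k *s frame_op a m (y k))"
  unfolding vec_eq_iff
  by (simp add: frame_op_component cinner_sum_left cinner_scale_left sum_distrib_left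
      sum_distrib_right sum.swap[of _ K] mult.assoc)

lemma frame_op_linear: "linear (frame_op a m)"
proof (rule linearI)
  fix x y show "frame_op a m (x + y) = frame_op a m x + frame_op a m y"
    unfolding vec_eq_iff by (simp add: frame_op_component cinner_add_left distrib_right sum.distrib)
next
  fix r :: real and x
  have scaleR_vec: "\<And>y::complex^'n. r *\<^sub>R y = complex_of_real r *s y"
    by (simp add: vec_eq_iff scaleR_conv_of_real[where 'a=complex])
  show "frame_op a m (r *\<^sub>R x) = r *\<^sub>R frame_op a m x"
    unfolding scaleR_vec vec_eq_iff
    by (simp add: frame_op_component cinner_scale_left sum_distrib_left mult.assoc)
qed

lemma cinner_frame_op_self:
  "cinner (frame_op a m x) x = of_real (\<Sum>k=1..m. (cmod (cinner x (a k)))\<^sup>2)"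
  unfolding frame_op_def
  by (simp add: cinner_sum_left cinner_scale_left cinner_commute[of "a _" x]
      complex_norm_square[symmetric])

lemma frame_op_inj:
  assumes fr: "is_frame a m lo up"
  shows "inj (frame_op a m)"
proof -
  have "x = 0" if "frame_op a m x = 0" for x
  proof -
    have "complex_of_real (\<Sum>k=1..m. (cmod (cinner x (a k)))\<^sup>2) = 0"
      by (metis cinner_frame_op_self cinner_zero_left that)
    then have "(\<Sum>k=1..m. (cmod (cinner x (a k)))\<^sup>2) = 0"
      by (rule of_real_eq_0_iff[THEN iffD1])
    then have "lo * (norm x)\<^sup>2 \<le> 0" and "0 < lo"
      using fr unfolding is_frame_def by metis+
    then show ?thesis by (simp add: mult_le_0_iff)
  qed
  then show ?thesis using linear_injective_0[OF frame_op_linear] by blast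
qed

lemma frame_op_dual_frame:
  assumes "is_frame a m lo up"
  shows "frame_op a m (dual_frame a m k) = a k"
  using linear_injective_imp_surjective[OF frame_op_linear frame_op_inj[OF assms]]
  unfolding dual_frame_def by (simp add: surj_f_inv_f)

lemma frame_reconstruction:
  assumes fr: "is_frame a m lo up"
  shows "x = (\<Sum>k=1..m. cinner x (a k) *s dual_frame a m k)"
proof -
  have "frame_op a m (\<Sum>k=1..m. cinner x (a k) *s dual_frame a m k)
          = (\<Sum>k=1..m. cinner x (a k) *s a k)"
    by (simp add: frame_op_sum_scale frame_op_dual_frame[OF fr])
  also have "\<dots> = frame_op a m x"
    unfolding frame_op_def ..
  finally show ?thesis using frame_op_inj[OF fr] by (simp add: inj_eq)
qed

text \<open>The synthesis operator of the canonical dual frame has norm at most \<open>lo\<^sup>-\<^sup>1\<^sup>/\<^sup>2\<close>: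
  for \<open>z = \<Sum>c\<^sub>k a\<^sup>*\<^sub>k\<close> one has \<open>\<Sum>|\<langle>z,a\<^sub>k\<rangle>|\<^sup>2 = \<langle>F z, z\<rangle> = \<Sum>c\<^sub>k\<langle>a\<^sub>k,z\<rangle>\<close>, and Cauchy-Schwarz bounds
  the right-hand side.\<close>

lemma dual_frame_synthesis_le:
  assumes fr: "is_frame a m lo up" and K: "K \<subseteq> {1..m}"
  shows "sqrt lo * norm (\<Sum>k\<in>K. c k *s dual_frame a m k) \<le> L2_set (\<lambda>k. cmod (c k)) K"
proof -
  define z where "z = (\<Sum>k\<in>K. c k *s dual_frame a m k)"
  define R where "R = L2_set (\<lambda>k. cmod (cinner z (a k))) {1..m}"
  define P where "P = L2_set (\<lambda>k. cmod (c k)) K"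
  have "R\<^sup>2 = cmod (complex_of_real (R\<^sup>2))"
    by (simp only: norm_of_real abs_power2)
  also have "complex_of_real (R\<^sup>2) = cinner (frame_op a m z) z"
    unfolding R_def L2_set_def cinner_frame_op_self by (simp add: sum_nonneg)
  also have "\<dots> = (\<Sum>k\<in>K. c k * cinner (a k) z)"
    unfolding z_def frame_op_sum_scale frame_op_dual_frame[OF fr] cinner_sum_left cinner_scale_left ..
  also have "cmod \<dots> \<le> (\<Sum>k\<in>K. \<bar>cmod (c k)\<bar> * \<bar>cmod (cinner z (a k))\<bar>)"
    by (rule order_trans[OF norm_sum]) (simp add: norm_mult cinner_commute[of "a _" z])
  also have "\<dots> \<le> P * L2_set (\<lambda>k. cmod (cinner z (a k))) K"
    unfolding P_def by (rule L2_set_mult_ineq)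
  also have "\<dots> \<le> P * R"
    unfolding R_def by (rule mult_left_mono[OF L2_set_subset_le[OF K]]) (simp_all add: P_def)
  finally have RR: "R * R \<le> P * R"
    by (simp add: power2_eq_square)
  have "R \<le> P"
  proof (cases "R = 0")
    case True
    then show ?thesis by (simp add: P_def)
  next
    case False
    then have "0 < R" by (simp add: R_def order_less_le)
    with RR show ?thesis by (rule mult_right_le_imp_le)
  qed
  then show ?thesis
    using frame_lower_bound[OF fr, of z] unfolding z_def R_def P_def by linarith
qed

lemma cinner_le_coherence:
  assumes "k \<in> {1..m}" "j \<in> {1..n}"
  shows "cmod (cinner (u k) (v j)) \<le> coherence u m v n"
  unfolding coherence_def by (rule Max_ge) (use assms in auto)

lemma coherence_nonneg:
  assumes "0 < m" "0 < n"
  shows "0 \<le> coherence u m v n"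
  using cinner_le_coherence[of 1 m 1 n u v] assms by (simp add: order_trans[OF norm_ge_zero])

lemma frame_index_pos:
  fixes a :: "nat \<Rightarrow> complex ^ 'n"
  assumes "is_frame a m lo up"
  shows "0 < m"
proof (rule ccontr)
  assume "\<not> 0 < m"
  from assms have lo: "0 < lo" and bound: "lo * (norm x)\<^sup>2 \<le> (\<Sum>k=1..m. (cmod (cinner x (a k)))\<^sup>2)"
    for x :: "complex ^ 'n"
    unfolding is_frame_def by auto
  have "lo * (norm (axis undefined 1 :: complex ^ 'n))\<^sup>2 \<le> 0"
    using bound[of "axis undefined 1"] \<open>\<not> 0 < m\<close> by simp
  with lo show False
    by (simp add: axis_eq_0_iff mult_le_0_iff)
qed

text \<open>Taking the trace of the identity \<open>x = \<Sum>\<langle>x,a\<^sub>k\<rangle>a\<^sup>*\<^sub>k\<close> gives \<open>dim = \<Sum>\<langle>a\<^sup>*\<^sub>k,a\<^sub>k\<rangle>\<close>, and the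
  dimension is at least 1.\<close>

lemma dual_frame_coherence_self_ge:
  fixes a :: "nat \<Rightarrow> complex ^ 'n"
  assumes fr: "is_frame a m lo up"
  shows "1 \<le> real m * coherence (dual_frame a m) m a m"
proof -
  let ?d = "dual_frame a m"
  have diag: "1 = (\<Sum>k=1..m. cnj (a k $ i) * ?d k $ i)" for i
  proof -
    have "cinner (axis i 1) (a k) = cnj (a k $ i)" for k
      unfolding cinner_def axis_def by (simp add: if_distrib[where f="\<lambda>t. t * _"] cong: if_cong)
    then show ?thesis
      using arg_cong[OF frame_reconstruction[OF fr, of "axis i 1"], of "\<lambda>y. y $ i"] by simp
  qed
  have "(of_nat CARD('n) :: complex) = (\<Sum>i\<in>(UNIV :: 'n set). 1)"
    by simp
  also have "\<dots> = (\<Sum>i\<in>UNIV. \<Sum>k=1..m. cnj (a k $ i) * ?d k $ i)"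
    using diag by simp
  also have "\<dots> = (\<Sum>k=1..m. cinner (?d k) (a k))"
    unfolding cinner_def by (subst sum.swap) (simp add: mult.commute)
  finally have trace: "(of_nat CARD('n) :: complex) = (\<Sum>k=1..m. cinner (?d k) (a k))" .
  have "1 \<le> real CARD('n)"
    by simp
  also have "\<dots> = cmod (\<Sum>k=1..m. cinner (?d k) (a k))"
    by (metis trace norm_of_nat)
  also have "\<dots> \<le> (\<Sum>k=1..m. coherence ?d m a m)"
    by (rule order_trans[OF norm_sum sum_mono]) (rule cinner_le_coherence; simp)
  finally show ?thesis by simp
qed

lemma coherence_frame_estimate:
  fixes a b :: "nat \<Rightarrow> complex ^ 'n"
  assumes frA: "is_frame a m \<alpha>1 \<alpha>2" and frB: "is_frame b n \<beta>1 \<beta>2"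
    and S_sub: "S \<subseteq> {1..m}" and T_sub: "T \<subseteq> {1..n}"
  shows "sqrt \<beta>1 * norm x
    \<le> sqrt \<alpha>2 * coherence (dual_frame a m) m b n * sqrt (real (card S)) * sqrt (real (card T)) * norm x
       + sqrt \<beta>2 / sqrt \<alpha>1 * L2_set (\<lambda>k. cmod (cinner x (a k))) ({1..m} - S)
       + L2_set (\<lambda>j. cmod (cinner x (b j))) ({1..n} - T)"
proof -
  define M where "M = coherence (dual_frame a m) m b n"
  define c where "c k = cinner x (a k)" for k
  define y where "y = (\<Sum>k\<in>S. c k *s dual_frame a m k)"
  define z where "z = (\<Sum>k\<in>{1..m} - S. c k *s dual_frame a m k)"
  define B where "B w J = L2_set (\<lambda>j. cmod (cinner w (b j))) J" for w J
  have a1: "0 < \<alpha>1" and b2: "0 \<le> \<beta>2"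
    using frA frB unfolding is_frame_def by auto
  have M0: "0 \<le> M"
    unfolding M_def by (rule coherence_nonneg[OF frame_index_pos[OF frA] frame_index_pos[OF frB]])
  have x_split: "x = y + z"
    using frame_reconstruction[OF frA, of x] sum.subset_diff[OF S_sub, of "\<lambda>k. c k *s dual_frame a m k"]
    unfolding y_def z_def c_def by (simp add: add.commute)
  have "B x T \<le> L2_set (\<lambda>j. cmod (cinner y (b j)) + cmod (cinner z (b j))) T"
    unfolding B_def by (rule L2_set_mono) (simp_all add: x_split cinner_add_left norm_triangle_ineq)
  also have "\<dots> \<le> B y T + B z T"
    unfolding B_def by (rule L2_set_triangle_ineq)
  finally have split_T: "B x T \<le> B y T + B z T" .
  have "B y T \<le> M * sqrt (real (card S)) * sqrt (real (card T)) * L2_set (\<lambda>k. cmod (c k)) S"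
    unfolding B_def y_def cinner_sum_left cinner_scale_left M_def
    using S_sub T_sub by (intro L2_set_sum_mult_le[OF M0[unfolded M_def]] cinner_le_coherence) auto
  also have "\<dots> \<le> M * sqrt (real (card S)) * sqrt (real (card T)) * (sqrt \<alpha>2 * norm x)"
    using L2_set_subset_le[OF S_sub] frame_upper_bound[OF frA, of x] M0
    unfolding c_def by (intro mult_left_mono) (auto intro: order_trans)
  finally have y_part: "B y T \<le> sqrt \<alpha>2 * M * sqrt (real (card S)) * sqrt (real (card T)) * norm x"
    by (simp add: mult_ac)
  have "B z T \<le> sqrt \<beta>2 * norm z"
    using L2_set_subset_le[OF T_sub] frame_upper_bound[OF frB, of z]
    unfolding B_def by (auto intro: order_trans)
  also have "\<dots> \<le> sqrt \<beta>2 * (L2_set (\<lambda>k. cmod (c k)) ({1..m} - S) / sqrt \<alpha>1)"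
    using dual_frame_synthesis_le[OF frA, of "{1..m} - S" c] a1 b2
    unfolding z_def by (intro mult_left_mono) (simp_all add: field_simps)
  finally have z_part: "B z T \<le> sqrt \<beta>2 / sqrt \<alpha>1 * L2_set (\<lambda>k. cmod (cinner x (a k))) ({1..m} - S)"
    unfolding c_def by simp
  have "sqrt \<beta>1 * norm x \<le> B x ({1..n} - T) + B x T"
    using frame_lower_bound[OF frB, of x] L2_set_split_le[OF T_sub]
    unfolding B_def by (auto intro: order_trans)
  with split_T y_part z_part show ?thesis
    unfolding B_def M_def by linarith
qed

lemma divide_max_coeff_le:
  fixes N t c d C p q :: real
  assumes "N * t \<le> c * p + d * q" and "c \<le> C" and "0 < d" and "0 \<le> p" and "0 \<le> q"
  shows "N / max d C * t \<le> p + q"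
proof -
  have "c * p + d * q \<le> max d C * p + max d C * q"
    using assms by (intro add_mono mult_right_mono) simp_all
  with assms(1) have "N * t \<le> (p + q) * max d C"
    by (simp add: algebra_simps)
  moreover have "0 < max d C"
    using assms(3) by (simp add: less_max_iff_disj)
  ultimately show ?thesis
    by (simp add: pos_divide_le_eq)
qed

theorem mainTheorem5:
  fixes a b :: "nat \<Rightarrow> complex ^ 'n"
    and m n :: nat
    and \<alpha>1 \<alpha>2 \<beta>1 \<beta>2 :: real
    and S T :: "nat set"
  assumes frameA: "is_frame a m \<alpha>1 \<alpha>2"
    and frameB: "is_frame b n \<beta>1 \<beta>2"
    and S_sub: "S \<subseteq> {1..m}"
    and T_sub: "T \<subseteq> {1..n}"
    and cond: "real (card S) * real (card T) * (coherence (dual_frame a m) m b n)\<^sup>2 < \<beta>1 / \<alpha>2"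
  shows "\<forall>x :: complex ^ 'n.
    ((1 - sqrt (\<alpha>2 / \<beta>1) * coherence (dual_frame a m) m b n * sqrt (real (card S)) * sqrt (real (card T)))
      / max (1 / sqrt \<beta>1)
            ((1 + sqrt (\<beta>2 / \<beta>1)) / sqrt \<alpha>1 * real m * coherence (dual_frame a m) m a m)) * norm x
    \<le> sqrt (\<Sum>k\<in>{1..m} - S. (cmod (cinner x (a k)))\<^sup>2)
       + sqrt (\<Sum>j\<in>{1..n} - T. (cmod (cinner x (b j)))\<^sup>2)"
proof
  \<comment> \<open>\<open>cond\<close> only makes the constant positive; the inequality holds without it.\<close>
  fix x :: "complex ^ 'n"
  define M where "M = coherence (dual_frame a m) m b n"
  define N where "N = 1 - sqrt (\<alpha>2 / \<beta>1) * M * sqrt (real (card S)) * sqrt (real (card T))"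
  define p where "p = sqrt (\<Sum>k\<in>{1..m} - S. (cmod (cinner x (a k)))\<^sup>2)"
  define q where "q = sqrt (\<Sum>j\<in>{1..n} - T. (cmod (cinner x (b j)))\<^sup>2)"
  have a1: "0 < \<alpha>1" and b1: "0 < \<beta>1" and b2: "0 \<le> \<beta>2"
    using frameA frameB unfolding is_frame_def by auto
  have "N * norm x
        = (sqrt \<beta>1 * norm x - sqrt \<alpha>2 * M * sqrt (real (card S)) * sqrt (real (card T)) * norm x)
          / sqrt \<beta>1"
    using b1 by (simp add: N_def real_sqrt_divide field_simps)
  also have "\<dots> \<le> (sqrt \<beta>2 / sqrt \<alpha>1 * p + q) / sqrt \<beta>1"
    using coherence_frame_estimate[OF frameA frameB S_sub T_sub, of x]
    unfolding M_def p_def q_def L2_set_def by (intro divide_right_mono) (use b1 in simp_all)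
  also have "\<dots> = sqrt (\<beta>2 / \<beta>1) / sqrt \<alpha>1 * p + 1 / sqrt \<beta>1 * q"
    using b1 by (simp add: real_sqrt_divide field_simps)
  finally have estimate: "N * norm x \<le> sqrt (\<beta>2 / \<beta>1) / sqrt \<alpha>1 * p + 1 / sqrt \<beta>1 * q" .
  have "sqrt (\<beta>2 / \<beta>1) / sqrt \<alpha>1 \<le> (1 + sqrt (\<beta>2 / \<beta>1)) / sqrt \<alpha>1 * 1"
    using a1 by (simp add: divide_right_mono)
  also have "\<dots> \<le> (1 + sqrt (\<beta>2 / \<beta>1)) / sqrt \<alpha>1 * (real m * coherence (dual_frame a m) m a m)"
    using dual_frame_coherence_self_ge[OF frameA] a1 b1 b2 by (intro mult_left_mono) simp_all
  finally have coefficient: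
    "sqrt (\<beta>2 / \<beta>1) / sqrt \<alpha>1 \<le> (1 + sqrt (\<beta>2 / \<beta>1)) / sqrt \<alpha>1 * real m * coherence (dual_frame a m) m a m"
    by (simp add: mult.assoc)
  show "N / max (1 / sqrt \<beta>1)
               ((1 + sqrt (\<beta>2 / \<beta>1)) / sqrt \<alpha>1 * real m * coherence (dual_frame a m) m a m) * norm x
        \<le> p + q"
    by (rule divide_max_coeff_le[OF estimate coefficient]) (simp_all add: b1 p_def q_def sum_nonneg)
qed

end
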